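(* Let $\mathbb{H}=\{z\in\mathbb{C}:\operatorname{Im}z>0\}$. For $z_1,z_2\in\mathbb{H}$ and $p\ge1$ let \[ T_p(z_1,z_2)=\frac{|z_1-z_2|}{|z_1-\overline{z_2}|\sqrt[p]{\alpha^p+(1-\alpha)^p}},\qquad \alpha=\frac{\operatorname{Im}(z_1)}{\operatorname{Im}(z_1)+\operatorname{Im}(z_2)}. \] Then \[ b_{\mathbb{H},p}(z_1,z_2)\ge T_p(z_1,z_2)\ge\frac{|z_1-z_2|}{|z_1-\overline{z_2}|}=s_{\mathbb{H}}(z_1,z_2). \] In particular $b_{\mathbb{H},1}(z_1,z_2)=T_1(z_1,z_2)=s_{\mathbb{H}}(z_1,z_2)$. For $p>1$, the equality $b_{\mathbb{H},p}(z_1,z_2)=T_p(z_1,z_2)$ holds if and only if $\operatorname{Re}(z_1)=\operatorname{Re}(z_2)$ or $\operatorname{Im}(z_1)=\operatorname{Im}(z_2)$.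
   Context: For $z_1,z_2\in\mathbb{H}$ and $p\ge1$, $b_{\mathbb{H},p}(z_1,z_2)=\sup_{t\in\mathbb{R}}\frac{|z_1-z_2|}{\sqrt[p]{|z_1-t|^p+|t-z_2|^p}}$, and $s_{\mathbb{H}}=b_{\mathbb{H},1}$. *)

theory Defs
  imports "HOL-Analysis.Analysis"
begin

definition upper_half_plane :: "complex set" where
  "upper_half_plane = {z. Im z > 0}"

definition bHp :: "real \<Rightarrow> complex \<Rightarrow> complex \<Rightarrow> real" where
  "bHp p z1 z2 = (SUP t::real. cmod (z1 - z2) /
      ((cmod (z1 - of_real t) powr p + cmod (of_real t - z2) powr p) powr (1 / p)))"

definition sH :: "complex \<Rightarrow> complex \<Rightarrow> real" where
  "sH z1 z2 = bHp 1 z1 z2"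

definition Tp :: "real \<Rightarrow> complex \<Rightarrow> complex \<Rightarrow> real" where
  "Tp p z1 z2 = (let \<alpha> = Im z1 / (Im z1 + Im z2) in
      cmod (z1 - z2) / (cmod (z1 - cnj z2) * (\<alpha> powr p + (1 - \<alpha>) powr p) powr (1 / p)))"

end

theory Submission
  imports Defs
begin

text \<open>
  With \<open>f\<^sub>p(t) = |z\<^sub>1 - t|^p + |t - z\<^sub>2|^p\<close>, \<open>b\<^sub>H\<^sub>,\<^sub>p(z\<^sub>1, z\<^sub>2)\<close> is \<open>|z\<^sub>1 - z\<^sub>2|\<close>
  over the infimum of \<open>f\<^sub>p^(1/p)\<close>. The segment from \<open>z\<^sub>1\<close> to the reflected point
  \<open>cnj z\<^sub>2\<close> crosses the real axis at \<open>t\<^sub>0\<close> with \<open>|z\<^sub>1 - t\<^sub>0| = \<alpha> D\<close> and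
  \<open>|t\<^sub>0 - z\<^sub>2| = (1 - \<alpha>) D\<close>, where \<open>D = |z\<^sub>1 - cnj z\<^sub>2|\<close>. So
  \<open>f\<^sub>p(t\<^sub>0)^(1/p) = D (\<alpha>^p + (1 - \<alpha>)^p)^(1/p)\<close>, which gives \<open>b\<^sub>H\<^sub>,\<^sub>p \<ge> T\<^sub>p\<close>,
  and \<open>\<alpha>^p + (1 - \<alpha>)^p \<le> 1\<close> gives \<open>T\<^sub>p \<ge> s\<^sub>H\<close>.
  Equality \<open>b\<^sub>H\<^sub>,\<^sub>p = T\<^sub>p\<close> holds exactly when \<open>t\<^sub>0\<close> minimises \<open>f\<^sub>p\<close>. For \<open>p = 1\<close>
  it does, by the triangle inequality through \<open>cnj z\<^sub>2\<close>. For \<open>p > 1\<close> it does if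
  \<open>Re z\<^sub>1 = Re z\<^sub>2\<close> (each term is minimal at \<open>t\<^sub>0\<close>) or \<open>Im z\<^sub>1 = Im z\<^sub>2\<close>
  (\<open>\<alpha> = 1/2\<close> and convexity of \<open>x^p\<close>); otherwise
  \<open>f\<^sub>p'(t\<^sub>0) = p (Re z\<^sub>2 - Re z\<^sub>1) (|z\<^sub>1 - t\<^sub>0|^(p-1) - |t\<^sub>0 - z\<^sub>2|^(p-1)) / D\<close>
  vanishes only if \<open>\<alpha> = 1/2\<close>.
\<close>

lemma powr_le_powr_iff_base:
  fixes x y a :: real
  assumes "0 < a" "0 \<le> x" "0 \<le> y"
  shows "x powr a \<le> y powr a \<longleftrightarrow> x \<le> y"
  using assms by (meson not_le powr_less_mono2 powr_mono2 less_imp_le)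

lemma le_powr_sum_root:
  fixes a b p :: real
  assumes "0 \<le> a" "0 \<le> b" "0 < p"
  shows "a \<le> (a powr p + b powr p) powr (1 / p)"
proof -
  have "(a powr p) powr (1 / p) \<le> (a powr p + b powr p) powr (1 / p)"
    using assms by (intro powr_mono2) auto
  then show ?thesis
    using assms by (simp add: powr_powr)
qed

lemma cSUP_divide_lower_bounded:
  fixes c m :: real and h :: "'a \<Rightarrow> real"
  assumes "0 \<le> c" "0 < m" "\<And>t. m \<le> h t"
  shows "c / h t\<^sub>0 \<le> (SUP t. c / h t)"
proof (rule cSUP_upper)
  show "bdd_above (range (\<lambda>t. c / h t))"
    using assms by (intro bdd_aboveI2[where M = "c / m"] frac_le) auto
qed simp

lemma cSUP_divide_eq_iff:
  fixes c m :: real and h :: "'a \<Rightarrow> real"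
  assumes "0 < c" "0 < m" "\<And>t. m \<le> h t"
  shows "(SUP t. c / h t) = c / h t\<^sub>0 \<longleftrightarrow> (\<forall>t. h t\<^sub>0 \<le> h t)"
proof
  assume sup: "(SUP t. c / h t) = c / h t\<^sub>0"
  show "\<forall>t. h t\<^sub>0 \<le> h t"
  proof
    fix t
    have "c / h t \<le> c / h t\<^sub>0"
      using cSUP_divide_lower_bounded[of c m h t] assms sup by simp
    moreover have "0 < h t" "0 < h t\<^sub>0"
      using assms order.strict_trans2 by blast+
    ultimately show "h t\<^sub>0 \<le> h t"
      using \<open>0 < c\<close> by (meson divide_strict_left_mono mult_pos_pos not_le)
  qed
next
  assume "\<forall>t. h t\<^sub>0 \<le> h t"
  then show "(SUP t. c / h t) = c / h t\<^sub>0"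
    using assms order.strict_trans2[OF \<open>0 < m\<close>]
    by (intro cSup_eq_maximum) (auto intro: frac_le)
qed

lemma has_real_derivative_cmod_diff_powr:
  assumes "Im z \<noteq> 0"
  shows "((\<lambda>t. cmod (z - of_real t) powr p) has_real_derivative
           p * (t - Re z) * cmod (z - of_real t) powr (p - 2)) (at t)"
proof -
  define Q where "Q t = (Re z - t)\<^sup>2 + (Im z)\<^sup>2" for t
  have Q_pos: "Q t > 0" for t
    using assms by (simp add: Q_def add_nonneg_pos)
  have cmod_eq: "cmod (z - of_real t) powr q = Q t powr (q / 2)" for t q
    using Q_pos[of t] by (simp add: cmod_def Q_def powr_half_sqrt[symmetric] powr_powr)
  have deriv: "((\<lambda>t. Q t powr (p / 2)) has_real_derivative
          p / 2 * Q t powr (p / 2 - of_nat 1) * (2 * (t - Re z))) (at t)"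
    by (rule DERIV_fun_powr) (use Q_pos[of t] in \<open>auto simp: Q_def intro!: derivative_eq_intros\<close>)
  have "p / 2 * Q t powr (p / 2 - of_nat 1) * (2 * (t - Re z))
      = p * (t - Re z) * Q t powr ((p - 2) / 2)"
    by (simp add: diff_divide_distrib)
  with deriv show ?thesis
    unfolding cmod_eq by (simp only:)
qed

definition real_axis_crossing :: "complex \<Rightarrow> complex \<Rightarrow> real" where
  "real_axis_crossing z\<^sub>1 z\<^sub>2 = (Re z\<^sub>1 * Im z\<^sub>2 + Re z\<^sub>2 * Im z\<^sub>1) / (Im z\<^sub>1 + Im z\<^sub>2)"

definition height_ratio :: "complex \<Rightarrow> complex \<Rightarrow> real" where
  "height_ratio z\<^sub>1 z\<^sub>2 = Im z\<^sub>1 / (Im z\<^sub>1 + Im z\<^sub>2)"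

definition dist_powr_sum :: "real \<Rightarrow> complex \<Rightarrow> complex \<Rightarrow> real \<Rightarrow> real" where
  "dist_powr_sum p z\<^sub>1 z\<^sub>2 t = cmod (z\<^sub>1 - of_real t) powr p + cmod (of_real t - z\<^sub>2) powr p"

lemma bHp_eq_SUP_dist_powr_sum:
  "bHp p z\<^sub>1 z\<^sub>2 = (SUP t. cmod (z\<^sub>1 - z\<^sub>2) / dist_powr_sum p z\<^sub>1 z\<^sub>2 t powr (1 / p))"
  by (simp add: bHp_def dist_powr_sum_def)

lemma Tp_eq_height_ratio:
  "Tp p z\<^sub>1 z\<^sub>2 = cmod (z\<^sub>1 - z\<^sub>2) / (cmod (z\<^sub>1 - cnj z\<^sub>2) *
     (height_ratio z\<^sub>1 z\<^sub>2 powr p + (1 - height_ratio z\<^sub>1 z\<^sub>2) powr p) powr (1 / p))"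
  by (simp add: Tp_def height_ratio_def Let_def)

lemma Im_le_cmod_diff_of_real: "Im z \<le> cmod (z - of_real t)"
  using abs_Im_le_cmod[of "z - of_real t"] by simp

lemma cmod_diff_cnj_le_dist_sum:
  "cmod (z\<^sub>1 - cnj z\<^sub>2) \<le> cmod (z\<^sub>1 - of_real t) + cmod (of_real t - z\<^sub>2)"
proof -
  have "cmod (of_real t - z\<^sub>2) = cmod (of_real t - cnj z\<^sub>2)"
    by (metis complex_mod_cnj complex_cnj_diff complex_cnj_complex_of_real)
  then show ?thesis
    using norm_triangle_ineq[of "z\<^sub>1 - of_real t" "of_real t - cnj z\<^sub>2"] by simp
qed

context
  fixes z\<^sub>1 z\<^sub>2 :: complex
  assumes Im_pos: "0 < Im z\<^sub>1" "0 < Im z\<^sub>2"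
begin

lemma height_ratio_bounds: "0 < height_ratio z\<^sub>1 z\<^sub>2" "height_ratio z\<^sub>1 z\<^sub>2 < 1"
  using Im_pos by (simp_all add: height_ratio_def)

lemma cmod_diff_cnj_pos: "0 < cmod (z\<^sub>1 - cnj z\<^sub>2)"
proof -
  have "Im z\<^sub>1 + Im z\<^sub>2 \<le> cmod (z\<^sub>1 - cnj z\<^sub>2)"
    using abs_Im_le_cmod[of "z\<^sub>1 - cnj z\<^sub>2"] by simp
  then show ?thesis
    using Im_pos by linarith
qed

lemma cmod_diff_real_axis_crossing_left:
  "cmod (z\<^sub>1 - of_real (real_axis_crossing z\<^sub>1 z\<^sub>2)) = height_ratio z\<^sub>1 z\<^sub>2 * cmod (z\<^sub>1 - cnj z\<^sub>2)"
proof -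
  have "z\<^sub>1 - of_real (real_axis_crossing z\<^sub>1 z\<^sub>2) = of_real (height_ratio z\<^sub>1 z\<^sub>2) * (z\<^sub>1 - cnj z\<^sub>2)"
    using Im_pos by (intro complex_eqI)
      (simp_all add: real_axis_crossing_def height_ratio_def field_simps)
  then show ?thesis
    using height_ratio_bounds by (simp add: norm_mult)
qed

lemma cmod_diff_real_axis_crossing_right:
  "cmod (of_real (real_axis_crossing z\<^sub>1 z\<^sub>2) - z\<^sub>2) = (1 - height_ratio z\<^sub>1 z\<^sub>2) * cmod (z\<^sub>1 - cnj z\<^sub>2)"
proof -
  have "of_real (real_axis_crossing z\<^sub>1 z\<^sub>2) - z\<^sub>2 = of_real (1 - height_ratio z\<^sub>1 z\<^sub>2) * cnj (z\<^sub>1 - cnj z\<^sub>2)"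
    using Im_pos by (intro complex_eqI)
      (simp_all add: real_axis_crossing_def height_ratio_def field_simps)
  then have "cmod (of_real (real_axis_crossing z\<^sub>1 z\<^sub>2) - z\<^sub>2)
      = \<bar>1 - height_ratio z\<^sub>1 z\<^sub>2\<bar> * cmod (z\<^sub>1 - cnj z\<^sub>2)"
    by (simp only: norm_mult norm_of_real complex_mod_cnj)
  then show ?thesis
    using height_ratio_bounds by simp
qed

lemma Im_le_dist_powr_sum_root:
  assumes "0 < p"
  shows "Im z\<^sub>1 \<le> dist_powr_sum p z\<^sub>1 z\<^sub>2 t powr (1 / p)"
proof -
  have "cmod (z\<^sub>1 - of_real t) \<le> dist_powr_sum p z\<^sub>1 z\<^sub>2 t powr (1 / p)"
    unfolding dist_powr_sum_def using assms by (intro le_powr_sum_root) auto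
  then show ?thesis
    using Im_le_cmod_diff_of_real[of z\<^sub>1 t] by linarith
qed

lemma Tp_eq_at_real_axis_crossing:
  assumes "0 < p"
  shows "Tp p z\<^sub>1 z\<^sub>2 = cmod (z\<^sub>1 - z\<^sub>2) / dist_powr_sum p z\<^sub>1 z\<^sub>2 (real_axis_crossing z\<^sub>1 z\<^sub>2) powr (1 / p)"
proof -
  define \<alpha> D where "\<alpha> = height_ratio z\<^sub>1 z\<^sub>2" and "D = cmod (z\<^sub>1 - cnj z\<^sub>2)"
  have "dist_powr_sum p z\<^sub>1 z\<^sub>2 (real_axis_crossing z\<^sub>1 z\<^sub>2) = D powr p * (\<alpha> powr p + (1 - \<alpha>) powr p)"
    using height_ratio_bounds cmod_diff_cnj_pos
    by (simp add: dist_powr_sum_def cmod_diff_real_axis_crossing_left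
        cmod_diff_real_axis_crossing_right \<alpha>_def D_def powr_mult distrib_left mult.commute)
  also have "\<dots> powr (1 / p) = D * (\<alpha> powr p + (1 - \<alpha>) powr p) powr (1 / p)"
    using assms cmod_diff_cnj_pos by (simp add: powr_mult powr_powr D_def)
  finally show ?thesis
    by (simp add: Tp_eq_height_ratio \<alpha>_def D_def)
qed

lemma Tp_le_bHp:
  assumes "0 < p"
  shows "Tp p z\<^sub>1 z\<^sub>2 \<le> bHp p z\<^sub>1 z\<^sub>2"
  unfolding bHp_eq_SUP_dist_powr_sum Tp_eq_at_real_axis_crossing[OF assms]
  using Im_pos Im_le_dist_powr_sum_root[OF assms]
  by (intro cSUP_divide_lower_bounded[where m = "Im z\<^sub>1"]) auto

lemma bHp_eq_Tp_iff:
  assumes "0 < p"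
  shows "bHp p z\<^sub>1 z\<^sub>2 = Tp p z\<^sub>1 z\<^sub>2 \<longleftrightarrow> z\<^sub>1 = z\<^sub>2 \<or>
    (\<forall>t. dist_powr_sum p z\<^sub>1 z\<^sub>2 (real_axis_crossing z\<^sub>1 z\<^sub>2) \<le> dist_powr_sum p z\<^sub>1 z\<^sub>2 t)"
proof (cases "z\<^sub>1 = z\<^sub>2")
  case True
  then show ?thesis
    by (simp add: bHp_def Tp_def)
next
  case False
  have "dist_powr_sum p z\<^sub>1 z\<^sub>2 s powr (1 / p) \<le> dist_powr_sum p z\<^sub>1 z\<^sub>2 t powr (1 / p)
      \<longleftrightarrow> dist_powr_sum p z\<^sub>1 z\<^sub>2 s \<le> dist_powr_sum p z\<^sub>1 z\<^sub>2 t" for s t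
    using assms by (intro powr_le_powr_iff_base) (auto simp: dist_powr_sum_def)
  then show ?thesis
    unfolding bHp_eq_SUP_dist_powr_sum Tp_eq_at_real_axis_crossing[OF assms]
    using False Im_pos assms
    by (subst cSUP_divide_eq_iff[where m = "Im z\<^sub>1"]) (auto intro: Im_le_dist_powr_sum_root)
qed

lemma Tp_1: "Tp 1 z\<^sub>1 z\<^sub>2 = cmod (z\<^sub>1 - z\<^sub>2) / cmod (z\<^sub>1 - cnj z\<^sub>2)"
  using height_ratio_bounds by (simp add: Tp_eq_height_ratio)

lemma cmod_ratio_le_Tp:
  assumes "1 \<le> p"
  shows "cmod (z\<^sub>1 - z\<^sub>2) / cmod (z\<^sub>1 - cnj z\<^sub>2) \<le> Tp p z\<^sub>1 z\<^sub>2"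
proof -
  define \<alpha> where "\<alpha> = height_ratio z\<^sub>1 z\<^sub>2"
  have "\<alpha> powr p + (1 - \<alpha>) powr p \<le> \<alpha> powr 1 + (1 - \<alpha>) powr 1"
    using assms height_ratio_bounds unfolding \<alpha>_def by (intro add_mono powr_mono') auto
  then have "(\<alpha> powr p + (1 - \<alpha>) powr p) powr (1 / p) \<le> 1"
    using assms height_ratio_bounds unfolding \<alpha>_def by (intro powr_le1) auto
  moreover have "0 < \<alpha> powr p + (1 - \<alpha>) powr p"
    using height_ratio_bounds unfolding \<alpha>_def by (intro add_pos_pos) auto
  then have "0 < (\<alpha> powr p + (1 - \<alpha>) powr p) powr (1 / p)"
    by simp
  ultimately show ?thesis
    unfolding Tp_eq_height_ratio \<alpha>_def[symmetric]
    using cmod_diff_cnj_pos by (intro frac_le) (auto simp: mult_left_le)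
qed

lemma real_axis_crossing_minimizes_dist_sum:
  "dist_powr_sum 1 z\<^sub>1 z\<^sub>2 (real_axis_crossing z\<^sub>1 z\<^sub>2) \<le> dist_powr_sum 1 z\<^sub>1 z\<^sub>2 t"
proof -
  have "0 < cmod (z\<^sub>1 - of_real s)" "0 < cmod (of_real s - z\<^sub>2)" for s
    using Im_pos Im_le_cmod_diff_of_real[of z\<^sub>1 s] Im_le_cmod_diff_of_real[of z\<^sub>2 s]
    by (auto simp: norm_minus_commute)
  then show ?thesis
    using cmod_diff_cnj_le_dist_sum[of z\<^sub>1 z\<^sub>2 t] height_ratio_bounds cmod_diff_cnj_pos
    by (simp add: dist_powr_sum_def cmod_diff_real_axis_crossing_left
        cmod_diff_real_axis_crossing_right algebra_simps)
qed

lemma real_axis_crossing_minimizes_if_Re_eq: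
  assumes "Re z\<^sub>1 = Re z\<^sub>2" "0 \<le> p"
  shows "dist_powr_sum p z\<^sub>1 z\<^sub>2 (real_axis_crossing z\<^sub>1 z\<^sub>2) \<le> dist_powr_sum p z\<^sub>1 z\<^sub>2 t"
proof -
  have crossing: "real_axis_crossing z\<^sub>1 z\<^sub>2 = Re z\<^sub>1"
    using assms(1) Im_pos by (simp add: real_axis_crossing_def field_simps)
  have "cmod (z\<^sub>1 - of_real (Re z\<^sub>1)) = Im z\<^sub>1" "cmod (of_real (Re z\<^sub>2) - z\<^sub>2) = Im z\<^sub>2"
    using Im_pos by (simp_all add: cmod_def)
  then show ?thesis
    unfolding dist_powr_sum_def crossing
    using assms Im_pos Im_le_cmod_diff_of_real[of z\<^sub>1 t] Im_le_cmod_diff_of_real[of z\<^sub>2 t]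
    by (intro add_mono powr_mono2) (auto simp: norm_minus_commute)
qed

lemma real_axis_crossing_minimizes_if_Im_eq:
  assumes "Im z\<^sub>1 = Im z\<^sub>2" "1 \<le> p"
  shows "dist_powr_sum p z\<^sub>1 z\<^sub>2 (real_axis_crossing z\<^sub>1 z\<^sub>2) \<le> dist_powr_sum p z\<^sub>1 z\<^sub>2 t"
proof -
  define D a b where "D = cmod (z\<^sub>1 - cnj z\<^sub>2)"
    and "a = cmod (z\<^sub>1 - of_real t)" and "b = cmod (of_real t - z\<^sub>2)"
  have half: "height_ratio z\<^sub>1 z\<^sub>2 = 1 / 2"
    using assms(1) Im_pos by (simp add: height_ratio_def)
  have "dist_powr_sum p z\<^sub>1 z\<^sub>2 (real_axis_crossing z\<^sub>1 z\<^sub>2) = 2 * (D / 2) powr p"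
    unfolding dist_powr_sum_def cmod_diff_real_axis_crossing_left
      cmod_diff_real_axis_crossing_right half D_def by simp
  also have "\<dots> \<le> 2 * ((a + b) / 2) powr p"
    using cmod_diff_cnj_le_dist_sum[of z\<^sub>1 z\<^sub>2 t] cmod_diff_cnj_pos assms
    by (intro mult_left_mono powr_mono2) (auto simp: D_def a_def b_def)
  also have "\<dots> \<le> a powr p + b powr p"
  proof -
    have "0 < a" "0 < b"
      using Im_pos Im_le_cmod_diff_of_real[of z\<^sub>1 t] Im_le_cmod_diff_of_real[of z\<^sub>2 t]
      by (auto simp: a_def b_def norm_minus_commute)
    then have "((1 - 1 / 2) *\<^sub>R a + (1 / 2) *\<^sub>R b) powr p \<le> (1 - 1 / 2) * a powr p + (1 / 2) * b powr p"
      using assms by (intro convex_onD[OF powr_convex]) auto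
    then show ?thesis
      by (simp add: field_simps)
  qed
  finally show ?thesis
    by (simp add: dist_powr_sum_def a_def b_def)
qed

lemma has_real_derivative_dist_powr_sum_at_real_axis_crossing:
  defines "t\<^sub>0 \<equiv> real_axis_crossing z\<^sub>1 z\<^sub>2"
  shows "(dist_powr_sum p z\<^sub>1 z\<^sub>2 has_real_derivative
     p * (Re z\<^sub>2 - Re z\<^sub>1) / cmod (z\<^sub>1 - cnj z\<^sub>2) *
       (cmod (z\<^sub>1 - of_real t\<^sub>0) powr (p - 1) - cmod (of_real t\<^sub>0 - z\<^sub>2) powr (p - 1))) (at t\<^sub>0)"
proof -
  define D w a b where "D = cmod (z\<^sub>1 - cnj z\<^sub>2)" and "w = Re z\<^sub>2 - Re z\<^sub>1"
    and "a = cmod (z\<^sub>1 - of_real t\<^sub>0)" and "b = cmod (of_real t\<^sub>0 - z\<^sub>2)"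
  have D: "0 < D" and a: "0 < a" and b: "0 < b"
    using cmod_diff_cnj_pos height_ratio_bounds
    by (simp_all add: D_def a_def b_def t\<^sub>0_def cmod_diff_real_axis_crossing_left
        cmod_diff_real_axis_crossing_right)
  have "t\<^sub>0 - Re z\<^sub>1 = w * height_ratio z\<^sub>1 z\<^sub>2" "t\<^sub>0 - Re z\<^sub>2 = - (w * (1 - height_ratio z\<^sub>1 z\<^sub>2))"
    using Im_pos by (simp_all add: t\<^sub>0_def w_def real_axis_crossing_def height_ratio_def field_simps)
  then have offsets: "t\<^sub>0 - Re z\<^sub>1 = w * a / D" "t\<^sub>0 - Re z\<^sub>2 = - (w * b / D)"
    using D by (simp_all add: a_def b_def D_def t\<^sub>0_def cmod_diff_real_axis_crossing_left
        cmod_diff_real_axis_crossing_right)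
  have powr_pred: "a powr (p - 1) = a * a powr (p - 2)" "b powr (p - 1) = b * b powr (p - 2)"
    using a b powr_mult_base[of a "p - 2"] powr_mult_base[of b "p - 2"] by simp_all
  have derivative_eq:
    "p * (t\<^sub>0 - Re z\<^sub>1) * a powr (p - 2) + p * (t\<^sub>0 - Re z\<^sub>2) * b powr (p - 2)
       = p * w / D * (a powr (p - 1) - b powr (p - 1))"
    unfolding offsets powr_pred using D by (simp add: field_simps)
  have "dist_powr_sum p z\<^sub>1 z\<^sub>2 = (\<lambda>t. cmod (z\<^sub>1 - of_real t) powr p + cmod (z\<^sub>2 - of_real t) powr p)"
    by (simp add: fun_eq_iff dist_powr_sum_def norm_minus_commute)
  then have "(dist_powr_sum p z\<^sub>1 z\<^sub>2 has_real_derivative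
      p * (t\<^sub>0 - Re z\<^sub>1) * a powr (p - 2) + p * (t\<^sub>0 - Re z\<^sub>2) * b powr (p - 2)) (at t\<^sub>0)"
    unfolding a_def b_def
    using Im_pos by (auto simp: norm_minus_commute intro!: DERIV_add has_real_derivative_cmod_diff_powr)
  then show ?thesis
    unfolding derivative_eq by (simp add: D_def w_def a_def b_def)
qed

lemma Re_eq_or_Im_eq_if_real_axis_crossing_minimizes:
  assumes "1 < p"
    and minimizes: "\<forall>t. dist_powr_sum p z\<^sub>1 z\<^sub>2 (real_axis_crossing z\<^sub>1 z\<^sub>2) \<le> dist_powr_sum p z\<^sub>1 z\<^sub>2 t"
  shows "Re z\<^sub>1 = Re z\<^sub>2 \<or> Im z\<^sub>1 = Im z\<^sub>2"
proof (cases "Re z\<^sub>1 = Re z\<^sub>2")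
  case Re_neq: False
  define D a b where "D = cmod (z\<^sub>1 - cnj z\<^sub>2)"
    and "a = height_ratio z\<^sub>1 z\<^sub>2 * D" and "b = (1 - height_ratio z\<^sub>1 z\<^sub>2) * D"
  have D: "0 < D" and a: "0 < a" and b: "0 < b"
    using cmod_diff_cnj_pos height_ratio_bounds by (simp_all add: D_def a_def b_def)
  have "p * (Re z\<^sub>2 - Re z\<^sub>1) / D * (a powr (p - 1) - b powr (p - 1)) = 0"
    using has_real_derivative_dist_powr_sum_at_real_axis_crossing[of p] minimizes
    by (intro DERIV_local_min[where d = 1])
      (auto simp: D_def a_def b_def cmod_diff_real_axis_crossing_left cmod_diff_real_axis_crossing_right)
  then have "a powr (p - 1) = b powr (p - 1)"
    using \<open>1 < p\<close> D Re_neq by simp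
  then have "a = b"
    using a b \<open>1 < p\<close> by (metis order.antisym order.refl powr_le_powr_iff_base less_imp_le diff_gt_0_iff_gt)
  then have "height_ratio z\<^sub>1 z\<^sub>2 = 1 / 2"
    using D by (simp add: a_def b_def)
  then show ?thesis
    using Im_pos by (simp add: height_ratio_def field_simps)
qed simp

lemma bHp_1_eq_Tp_1: "bHp 1 z\<^sub>1 z\<^sub>2 = Tp 1 z\<^sub>1 z\<^sub>2"
  using bHp_eq_Tp_iff[of 1] real_axis_crossing_minimizes_dist_sum by simp

lemma bHp_eq_Tp_iff_Re_eq_or_Im_eq:
  assumes "1 < p"
  shows "bHp p z\<^sub>1 z\<^sub>2 = Tp p z\<^sub>1 z\<^sub>2 \<longleftrightarrow> Re z\<^sub>1 = Re z\<^sub>2 \<or> Im z\<^sub>1 = Im z\<^sub>2"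
  using assms bHp_eq_Tp_iff[of p] real_axis_crossing_minimizes_if_Re_eq[of p]
    real_axis_crossing_minimizes_if_Im_eq[of p] Re_eq_or_Im_eq_if_real_axis_crossing_minimizes[of p]
  by auto

end

theorem theorem3p21:
  fixes z1 z2 :: complex and p :: real
  assumes "z1 \<in> upper_half_plane" and "z2 \<in> upper_half_plane" and "p \<ge> 1"
  shows "bHp p z1 z2 \<ge> Tp p z1 z2
    \<and> Tp p z1 z2 \<ge> cmod (z1 - z2) / cmod (z1 - cnj z2)
    \<and> cmod (z1 - z2) / cmod (z1 - cnj z2) = sH z1 z2
    \<and> bHp 1 z1 z2 = Tp 1 z1 z2 \<and> Tp 1 z1 z2 = sH z1 z2
    \<and> (p > 1 \<longrightarrow> (bHp p z1 z2 = Tp p z1 z2 \<longleftrightarrow> Re z1 = Re z2 \<or> Im z1 = Im z2))"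
proof -
  have Im_pos: "0 < Im z1" "0 < Im z2"
    using assms(1,2) by (simp_all add: upper_half_plane_def)
  have "Tp 1 z1 z2 = sH z1 z2"
    using bHp_1_eq_Tp_1[OF Im_pos] by (simp add: sH_def)
  then show ?thesis
    using Tp_le_bHp[OF Im_pos] cmod_ratio_le_Tp[OF Im_pos] Tp_1[OF Im_pos] bHp_1_eq_Tp_1[OF Im_pos]
      bHp_eq_Tp_iff_Re_eq_or_Im_eq[OF Im_pos] assms(3)
    by auto
qed

end
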